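(* Let $\rho$ be a density operator on $H$. Then for all $A\in\mathcal{A}$, $0\le\mu_\rho(A)\le\nu(A)$. Moreover, $\mu_\rho$ satisfies grade-2 additivity: $\mu_\rho(A\cup B\cup C)=\mu_\rho(A\cup B)+\mu_\rho(A\cup C)+\mu_\rho(B\cup C)-\mu_\rho(A)-\mu_\rho(B)-\mu_\rho(C)$ for mutually disjoint $A,B,C\in\mathcal{A}$; and $\mu_\rho$ is continuous: $\mu_\rho(A_i)\to\mu_\rho(\bigcup_i A_i)$ for every increasing sequence $A_1\subseteq A_2\subseteq\cdots$ in $\mathcal{A}$ and $\mu_\rho(B_i)\to\mu_\rho(\bigcap_i B_i)$ for every decreasing sequence $B_1\supseteq B_2\supseteq\cdots$ in $\mathcal{A}$.
   Context: $(\Omega,\mathcal{A},\nu)$ is a probability space and $H=L_2(\Omega,\mathcal{A},\nu)$ is the complex Hilbert space with inner product $\langle f,g\rangle=\int\bar f g\,d\nu$. For $A\in\mathcal{A}$, $\chi_A$ is its characteristic function and $\mu(A)=|\chi_A\rangle\langle\chi_A|$ is the operator $f\mapsto\left(\int_A f\,d\nu\right)\chi_A$ on $H$. A density operator is a positive trace-class operator of trace $1$. For a density operator $\rho$, the $q$-measure is $\mu_\rho(A)=\mathrm{tr}[\rho\mu(A)]$. *)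

theory Defs
  imports "HOL-Probability.Probability"
begin

text \<open>The Hilbert space H = L_2(Omega, A, nu) is represented by its square-integrable
  complex-valued representatives; elements are identified up to nu-a.e. equality.\<close>

definition L2 :: "'a measure \<Rightarrow> ('a \<Rightarrow> complex) set" where
  "L2 M = {f. f \<in> borel_measurable M \<and> integrable M (\<lambda>x. (cmod (f x))\<^sup>2)}"

definition ip :: "'a measure \<Rightarrow> ('a \<Rightarrow> complex) \<Rightarrow> ('a \<Rightarrow> complex) \<Rightarrow> complex" where
  "ip M f g = (LINT x|M. cnj (f x) * g x)"

definition onb :: "'a measure \<Rightarrow> ('a \<Rightarrow> complex) set \<Rightarrow> bool" where
  "onb M B \<longleftrightarrow> B \<subseteq> L2 M
     \<and> (\<forall>e\<in>B. ip M e e = 1)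
     \<and> (\<forall>e\<in>B. \<forall>e'\<in>B. e \<noteq> e' \<longrightarrow> ip M e e' = 0)
     \<and> (\<forall>f\<in>L2 M. (\<forall>e\<in>B. ip M e f = 0) \<longrightarrow> ip M f f = 0)"

definition is_operator :: "'a measure \<Rightarrow> (('a \<Rightarrow> complex) \<Rightarrow> ('a \<Rightarrow> complex)) \<Rightarrow> bool" where
  "is_operator M T \<longleftrightarrow>
     (\<forall>f\<in>L2 M. T f \<in> L2 M)
     \<and> (\<forall>f\<in>L2 M. \<forall>g\<in>L2 M. (AE x in M. f x = g x) \<longrightarrow> (AE x in M. T f x = T g x))
     \<and> (\<forall>f\<in>L2 M. \<forall>g\<in>L2 M. \<forall>c. AE x in M. T (\<lambda>y. c * f y + g y) x = c * T f x + T g x)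
     \<and> (\<exists>K. \<forall>f\<in>L2 M. Re (ip M (T f) (T f)) \<le> K * Re (ip M f f))"

definition positive_op :: "'a measure \<Rightarrow> (('a \<Rightarrow> complex) \<Rightarrow> ('a \<Rightarrow> complex)) \<Rightarrow> bool" where
  "positive_op M T \<longleftrightarrow> (\<forall>f\<in>L2 M. ip M f (T f) \<in> \<real> \<and> 0 \<le> Re (ip M f (T f)))"

text \<open>Trace: sum of diagonal entries in an orthonormal basis (basis-independent for trace-class operators).\<close>
definition trace :: "'a measure \<Rightarrow> (('a \<Rightarrow> complex) \<Rightarrow> ('a \<Rightarrow> complex)) \<Rightarrow> complex" where
  "trace M T = infsum (\<lambda>e. ip M e (T e)) (SOME B. onb M B)"

text \<open>Density operator: positive trace-class operator of trace 1. For a positive operator,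
  trace class means the diagonal sum (of |T| = T) is finite in an orthonormal basis.\<close>
definition density_operator :: "'a measure \<Rightarrow> (('a \<Rightarrow> complex) \<Rightarrow> ('a \<Rightarrow> complex)) \<Rightarrow> bool" where
  "density_operator M \<rho> \<longleftrightarrow> is_operator M \<rho> \<and> positive_op M \<rho>
     \<and> (\<exists>B. onb M B \<and> (\<lambda>e. ip M e (\<rho> e)) summable_on B \<and> infsum (\<lambda>e. ip M e (\<rho> e)) B = 1)"

text \<open>mu(A) = |chi_A><chi_A| : f \<mapsto> (int_A f dnu) chi_A.\<close>
definition qmu :: "'a measure \<Rightarrow> 'a set \<Rightarrow> ('a \<Rightarrow> complex) \<Rightarrow> ('a \<Rightarrow> complex)" where
  "qmu M A f = (\<lambda>x. (LINT y:A|M. f y) * indicator A x)"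

definition mu_q :: "'a measure \<Rightarrow> (('a \<Rightarrow> complex) \<Rightarrow> ('a \<Rightarrow> complex)) \<Rightarrow> 'a set \<Rightarrow> complex" where
  "mu_q M \<rho> A = trace M (\<rho> \<circ> qmu M A)"

end

theory Submission
  imports Defs
begin

(* For a measurable set A write chi_A for its characteristic function.
   The key identity is  mu_rho(A) = tr[rho |chi_A><chi_A|] = <chi_A, rho chi_A>  (mu_q_eq_form):
   in any orthonormal basis B the diagonal terms of rho mu(A) are cnj <e,chi_A> <e, rho chi_A>,
   which sum to <chi_A, rho chi_A> by the polarized Parseval identity.  Everything then follows
   from properties of the quadratic form Q(u) = <u, rho u>:
   - 0 <= Q(chi_A) since rho is positive, and Q(u) <= |u|^2 because the trace of rho is 1
     (Parseval plus Cauchy-Schwarz for the form of rho), while |chi_A|^2 = nu(A);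
   - Q is the quadratic form of a hermitian sesquilinear form, and chi of a disjoint union is
     the sum of the chi's, which gives grade-2 additivity;
   - Q is continuous in L2 since rho is bounded, and |chi_{A_i} - chi_A|^2 = nu(A - A_i) -> 0
     for monotone sequences by continuity of the measure nu. *)

definition nrm2 :: "'a measure \<Rightarrow> ('a \<Rightarrow> complex) \<Rightarrow> real" where
  "nrm2 M f = (LINT x|M. (cmod (f x))\<^sup>2)"

lemma measurable_cnj [measurable (raw)]:
  "f \<in> borel_measurable M \<Longrightarrow> (\<lambda>x. cnj (f x)) \<in> borel_measurable M"
  by (rule borel_measurable_continuous_on[OF continuous_on_cnj[OF continuous_on_id]])

lemma L2I: "f \<in> borel_measurable M \<Longrightarrow> integrable M (\<lambda>x. (cmod (f x))\<^sup>2) \<Longrightarrow> f \<in> L2 M"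
  by (simp add: L2_def)

lemma L2_measurable: "f \<in> L2 M \<Longrightarrow> f \<in> borel_measurable M"
  by (simp add: L2_def)

lemma L2_integrable_sq: "f \<in> L2 M \<Longrightarrow> integrable M (\<lambda>x. (cmod (f x))\<^sup>2)"
  by (simp add: L2_def)

lemma cmod_cnj_mult_le: "cmod (cnj a * b) \<le> ((cmod a)\<^sup>2 + (cmod b)\<^sup>2) / 2"
proof -
  have "0 \<le> (cmod a - cmod b)\<^sup>2" by simp
  then show ?thesis by (simp add: norm_mult power2_eq_square algebra_simps)
qed

lemma cmod_add_sq_le: "(cmod (a + b))\<^sup>2 \<le> 2 * (cmod a)\<^sup>2 + 2 * (cmod b)\<^sup>2"
proof -
  have "(cmod (a + b))\<^sup>2 \<le> (cmod a + cmod b)\<^sup>2"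
    using norm_triangle_ineq[of a b] by (simp add: power_mono)
  moreover have "0 \<le> (cmod a - cmod b)\<^sup>2" by simp
  ultimately show ?thesis by (simp add: power2_eq_square algebra_simps)
qed

lemma L2_cnj_mult_integrable:
  assumes "f \<in> L2 M" "g \<in> L2 M"
  shows "integrable M (\<lambda>x. cnj (f x) * g x)"
proof (rule Bochner_Integration.integrable_bound)
  show "integrable M (\<lambda>x. ((cmod (f x))\<^sup>2 + (cmod (g x))\<^sup>2) / 2)"
    using L2_integrable_sq[OF assms(1)] L2_integrable_sq[OF assms(2)] by auto
  show "(\<lambda>x. cnj (f x) * g x) \<in> borel_measurable M"
    using L2_measurable[OF assms(1)] L2_measurable[OF assms(2)] by measurable
  show "AE x in M. norm (cnj (f x) * g x) \<le> norm (((cmod (f x))\<^sup>2 + (cmod (g x))\<^sup>2) / 2)"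
    using cmod_cnj_mult_le by (auto intro!: AE_I2 order_trans[OF cmod_cnj_mult_le])
qed

lemma L2_lin:
  assumes "f \<in> L2 M" "g \<in> L2 M"
  shows "(\<lambda>x. c * f x + g x) \<in> L2 M"
proof (rule L2I)
  show meas: "(\<lambda>x. c * f x + g x) \<in> borel_measurable M"
    using L2_measurable[OF assms(1)] L2_measurable[OF assms(2)] by measurable
  show "integrable M (\<lambda>x. (cmod (c * f x + g x))\<^sup>2)"
  proof (rule Bochner_Integration.integrable_bound)
    show "integrable M (\<lambda>x. 2 * (cmod c)\<^sup>2 * (cmod (f x))\<^sup>2 + 2 * (cmod (g x))\<^sup>2)"
      using L2_integrable_sq[OF assms(1)] L2_integrable_sq[OF assms(2)] by auto
    show "(\<lambda>x. (cmod (c * f x + g x))\<^sup>2) \<in> borel_measurable M"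
      using meas by measurable
    show "AE x in M. norm ((cmod (c * f x + g x))\<^sup>2)
        \<le> norm (2 * (cmod c)\<^sup>2 * (cmod (f x))\<^sup>2 + 2 * (cmod (g x))\<^sup>2)"
      using cmod_add_sq_le[of "c * f x" "g x" for x]
      by (intro AE_I2) (simp add: norm_mult power_mult_distrib mult.assoc)
  qed
qed

lemma L2_zero: "(\<lambda>x. 0) \<in> L2 M"
  by (rule L2I) auto

lemma L2_add: "f \<in> L2 M \<Longrightarrow> g \<in> L2 M \<Longrightarrow> (\<lambda>x. f x + g x) \<in> L2 M"
  using L2_lin[of f M g 1] by simp

lemma L2_scale: "f \<in> L2 M \<Longrightarrow> (\<lambda>x. c * f x) \<in> L2 M"
  using L2_lin[OF _ L2_zero, of f M c] by simp

lemma L2_diff: "f \<in> L2 M \<Longrightarrow> g \<in> L2 M \<Longrightarrow> (\<lambda>x. f x - g x) \<in> L2 M"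
  using L2_lin[of g M f "-1"] by simp

lemma L2_sum: "finite F \<Longrightarrow> (\<And>i. i \<in> F \<Longrightarrow> u i \<in> L2 M) \<Longrightarrow> (\<lambda>x. \<Sum>i\<in>F. u i x) \<in> L2 M"
  by (induction F rule: finite_induct) (auto intro: L2_add L2_zero)

lemma L2_const: "finite_measure M \<Longrightarrow> (\<lambda>x. c) \<in> L2 M"
  by (rule L2I) (auto simp: finite_measure.integrable_const)

lemma L2_indicator:
  assumes "finite_measure M" "A \<in> sets M"
  shows "(indicator A :: 'a \<Rightarrow> complex) \<in> L2 M"
proof (rule L2I)
  show "(indicator A :: 'a \<Rightarrow> complex) \<in> borel_measurable M"
    using assms(2) by measurable
  have "(\<lambda>x. (cmod (indicator A x :: complex))\<^sup>2) = (\<lambda>x. indicator A x :: real)"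
    by (auto simp: indicator_def)
  moreover have "emeasure M A < \<infinity>"
    using assms by (simp add: finite_measure.emeasure_finite less_top[symmetric])
  ultimately show "integrable M (\<lambda>x. (cmod (indicator A x :: complex))\<^sup>2)"
    using assms(2) by simp
qed

lemma nrm2_nonneg: "0 \<le> nrm2 M f"
  unfolding nrm2_def by simp

lemma nrm2_diff_commute: "nrm2 M (\<lambda>x. a x - b x) = nrm2 M (\<lambda>x. b x - a x)"
  unfolding nrm2_def by (simp add: norm_minus_commute)

lemma cnj_mult_self: "cnj z * z = complex_of_real ((cmod z)\<^sup>2)"
  using cmod_power2[of z] by (simp add: complex_eq_iff power2_eq_square del: of_real_power)

lemma ip_self: "ip M f f = complex_of_real (nrm2 M f)"
  unfolding ip_def nrm2_def by (simp add: cnj_mult_self del: of_real_power)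

lemma ip_cnj: "ip M g f = cnj (ip M f g)"
proof -
  have "cnj (ip M f g) = (CLINT x|M. cnj (cnj (f x) * g x))"
    unfolding ip_def by (rule Bochner_Integration.integral_cnj[symmetric])
  then show ?thesis unfolding ip_def by (simp add: mult.commute)
qed

lemma ip_lin_right:
  assumes "f \<in> L2 M" "g \<in> L2 M" "h \<in> L2 M"
  shows "ip M f (\<lambda>x. c * g x + h x) = c * ip M f g + ip M f h"
proof -
  have "(\<lambda>x. cnj (f x) * (c * g x + h x)) = (\<lambda>x. c * (cnj (f x) * g x) + cnj (f x) * h x)"
    by (auto simp: algebra_simps)
  then show ?thesis
    unfolding ip_def
    using L2_cnj_mult_integrable[OF assms(1,2)] L2_cnj_mult_integrable[OF assms(1,3)] by simp
qed

lemma ip_lin_left: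
  assumes "f \<in> L2 M" "g \<in> L2 M" "h \<in> L2 M"
  shows "ip M (\<lambda>x. c * g x + h x) f = cnj c * ip M g f + ip M h f"
  using ip_lin_right[OF assms, of c] by (metis complex_cnj_add complex_cnj_mult complex_cnj_cnj ip_cnj)

lemma ip_diff_right:
  assumes "f \<in> L2 M" "g \<in> L2 M" "h \<in> L2 M"
  shows "ip M f (\<lambda>x. g x - h x) = ip M f g - ip M f h"
  using ip_lin_right[OF assms(1,3,2), of "-1"] by simp

lemma ip_diff_left:
  assumes "f \<in> L2 M" "g \<in> L2 M" "h \<in> L2 M"
  shows "ip M (\<lambda>x. g x - h x) f = ip M g f - ip M h f"
  using ip_lin_left[OF assms(1,3,2), of "-1"] by simp

lemma ip_zero_right: "ip M f (\<lambda>x. 0) = 0"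
  unfolding ip_def by simp

lemma ip_cong_AE_right:
  assumes "f \<in> L2 M" "g \<in> L2 M" "h \<in> L2 M" "AE x in M. g x = h x"
  shows "ip M f g = ip M f h"
  unfolding ip_def using assms(4) L2_measurable[OF assms(1)] L2_measurable[OF assms(2)]
    L2_measurable[OF assms(3)]
  by (intro integral_cong_AE) auto

lemma nrm2_cong_AE:
  assumes "g \<in> L2 M" "h \<in> L2 M" "AE x in M. g x = h x"
  shows "nrm2 M g = nrm2 M h"
proof -
  have "ip M g g = ip M h h"
    using ip_cong_AE_right[OF assms(1,1,2,3)] ip_cong_AE_right[OF assms(2,1,2,3)]
    by (metis ip_cnj)
  then show ?thesis by (simp add: ip_self)
qed

lemma nrm2_eq_0_AE:
  assumes "f \<in> L2 M" "nrm2 M f = 0"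
  shows "AE x in M. f x = 0"
proof -
  have "AE x in M. (cmod (f x))\<^sup>2 = 0"
    using assms integral_nonneg_eq_0_iff_AE[of M "\<lambda>x. (cmod (f x))\<^sup>2"]
    by (auto simp: nrm2_def L2_def)
  then show ?thesis by auto
qed

lemma nrm2_add_le:
  assumes "a \<in> L2 M" "b \<in> L2 M"
  shows "nrm2 M (\<lambda>x. a x + b x) \<le> 2 * nrm2 M a + 2 * nrm2 M b"
proof -
  have "nrm2 M (\<lambda>x. a x + b x) \<le> (LINT x|M. 2 * (cmod (a x))\<^sup>2 + 2 * (cmod (b x))\<^sup>2)"
    unfolding nrm2_def
    using L2_integrable_sq[OF L2_add[OF assms]] L2_integrable_sq[OF assms(1)]
      L2_integrable_sq[OF assms(2)]
    by (intro integral_mono) (auto intro: cmod_add_sq_le)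
  also have "\<dots> = 2 * nrm2 M a + 2 * nrm2 M b"
    unfolding nrm2_def using L2_integrable_sq[OF assms(1)] L2_integrable_sq[OF assms(2)] by simp
  finally show ?thesis .
qed

lemma nrm2_nn_integral:
  assumes "f \<in> L2 M"
  shows "(\<integral>\<^sup>+x. ennreal ((cmod (f x))\<^sup>2) \<partial>M) = ennreal (nrm2 M f)"
  unfolding nrm2_def using L2_integrable_sq[OF assms] by (intro nn_integral_eq_integral) auto


section \<open>Hermitian forms on function spaces\<close>

text \<open>Both the inner product
  and the form (f, g) \<mapsto> <f, T g> of a positive operator T are instances.\<close>
definition hermitian_form ::
    "('b \<Rightarrow> complex) set \<Rightarrow> (('b \<Rightarrow> complex) \<Rightarrow> ('b \<Rightarrow> complex) \<Rightarrow> complex) \<Rightarrow> bool" where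
  "hermitian_form V Bf \<longleftrightarrow>
     (\<forall>g\<in>V. \<forall>h\<in>V. \<forall>c. (\<lambda>x. c * g x + h x) \<in> V)
     \<and> (\<forall>f\<in>V. \<forall>g\<in>V. Bf g f = cnj (Bf f g))
     \<and> (\<forall>f\<in>V. \<forall>g\<in>V. \<forall>h\<in>V. \<forall>c. Bf f (\<lambda>x. c * g x + h x) = c * Bf f g + Bf f h)"

context
  fixes V and Bf :: "('b \<Rightarrow> complex) \<Rightarrow> ('b \<Rightarrow> complex) \<Rightarrow> complex"
  assumes form: "hermitian_form V Bf"
begin

lemma hf_closed: "g \<in> V \<Longrightarrow> h \<in> V \<Longrightarrow> (\<lambda>x. c * g x + h x) \<in> V"
  using form unfolding hermitian_form_def by blast

lemma hf_add_closed: "g \<in> V \<Longrightarrow> h \<in> V \<Longrightarrow> (\<lambda>x. g x + h x) \<in> V"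
  using hf_closed[of g h 1] by simp

lemma hf_herm: "f \<in> V \<Longrightarrow> g \<in> V \<Longrightarrow> Bf g f = cnj (Bf f g)"
  using form unfolding hermitian_form_def by blast

lemma hf_lin_right:
  "f \<in> V \<Longrightarrow> g \<in> V \<Longrightarrow> h \<in> V \<Longrightarrow> Bf f (\<lambda>x. c * g x + h x) = c * Bf f g + Bf f h"
  using form unfolding hermitian_form_def by blast

lemma hf_lin_left:
  assumes "f \<in> V" "g \<in> V" "h \<in> V"
  shows "Bf (\<lambda>x. c * g x + h x) f = cnj c * Bf g f + Bf h f"
proof -
  have "Bf (\<lambda>x. c * g x + h x) f = cnj (Bf f (\<lambda>x. c * g x + h x))"
    by (rule hf_herm[OF assms(1) hf_closed[OF assms(2,3)]])
  also have "\<dots> = cnj c * cnj (Bf f g) + cnj (Bf f h)"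
    unfolding hf_lin_right[OF assms] by simp
  finally show ?thesis unfolding hf_herm[OF assms(1,2)] hf_herm[OF assms(1,3)] by simp
qed

lemma hf_quadratic_add:
  assumes u: "u \<in> V" and v: "v \<in> V"
  shows "Bf (\<lambda>x. u x + v x) (\<lambda>x. u x + v x) = Bf u u + Bf u v + Bf v u + Bf v v"
  using hf_lin_left[OF hf_add_closed[OF u v] u v, of 1]
    hf_lin_right[OF u u v, of 1] hf_lin_right[OF v u v, of 1] by simp

lemma hf_quadratic_grade2:
  assumes u: "u \<in> V" and v: "v \<in> V" and w: "w \<in> V"
  shows "Bf (\<lambda>x. u x + v x + w x) (\<lambda>x. u x + v x + w x)
    = Bf (\<lambda>x. u x + v x) (\<lambda>x. u x + v x) + Bf (\<lambda>x. u x + w x) (\<lambda>x. u x + w x)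
      + Bf (\<lambda>x. v x + w x) (\<lambda>x. v x + w x) - Bf u u - Bf v v - Bf w w"
proof -
  have uv: "(\<lambda>x. u x + v x) \<in> V" by (rule hf_add_closed[OF u v])
  have "Bf (\<lambda>x. u x + v x + w x) (\<lambda>x. u x + v x + w x)
     = Bf (\<lambda>x. u x + v x) (\<lambda>x. u x + v x) + Bf (\<lambda>x. u x + v x) w
       + Bf w (\<lambda>x. u x + v x) + Bf w w"
    using hf_quadratic_add[OF uv w] by simp
  also have "Bf (\<lambda>x. u x + v x) w = Bf u w + Bf v w"
    using hf_lin_left[OF w u v, of 1] by simp
  also have "Bf w (\<lambda>x. u x + v x) = Bf w u + Bf w v"
    using hf_lin_right[OF w u v, of 1] by simp
  finally show ?thesis
    unfolding hf_quadratic_add[OF u v] hf_quadratic_add[OF u w] hf_quadratic_add[OF v w]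
    by (simp add: algebra_simps)
qed

lemma hf_quadratic_Re:
  assumes f: "f \<in> V" and g: "g \<in> V"
  shows "Re (Bf (\<lambda>x. s * g x + f x) (\<lambda>x. s * g x + f x))
      = (cmod s)\<^sup>2 * Re (Bf g g) + 2 * Re (s * Bf f g) + Re (Bf f f)"
proof -
  let ?h = "\<lambda>x. s * g x + f x"
  have h: "?h \<in> V" by (rule hf_closed[OF g f])
  have "Bf ?h ?h = cnj s * Bf g ?h + Bf f ?h" by (rule hf_lin_left[OF h g f])
  also have "\<dots> = cnj s * (s * Bf g g + cnj (Bf f g)) + (s * Bf f g + Bf f f)"
    unfolding hf_lin_right[OF g g f] hf_lin_right[OF f g f] hf_herm[OF f g] ..
  finally have "Re (Bf ?h ?h)
      = (Re s * Re s + Im s * Im s) * Re (Bf g g) + 2 * Re (s * Bf f g) + Re (Bf f f)"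
    by (simp add: algebra_simps)
  moreover have "cmod s * cmod s = Re s * Re s + Im s * Im s"
    using cmod_power2[of s] by (simp only: power2_eq_square)
  ultimately show ?thesis by (simp only: power2_eq_square)
qed

end

lemma quadratic_nonneg_discriminant:
  fixes a b c :: real
  assumes "\<And>t. 0 \<le> a + 2 * t * b + t\<^sup>2 * c" "0 \<le> c"
  shows "b\<^sup>2 \<le> a * c"
proof (cases "c = 0")
  case True
  show ?thesis
  proof (cases "b = 0")
    case False
    have "0 \<le> a + 2 * (-(a+1)/(2*b)) * b + (-(a+1)/(2*b))\<^sup>2 * c" by (rule assms(1))
    with True False show ?thesis by (simp add: field_simps)
  qed (use True assms in simp)
next
  case False
  with assms have c: "c > 0" by simp
  have "0 \<le> a + 2 * (-b/c) * b + (-b/c)\<^sup>2 * c" by (rule assms(1))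
  also have "\<dots> = (a * c - b\<^sup>2) / c" using c by (simp add: field_simps power2_eq_square)
  finally show ?thesis using c by (simp add: zero_le_divide_iff)
qed

text \<open>Cauchy-Schwarz inequality for positive semidefinite hermitian forms: evaluate the
  quadratic form on t (cnj b / |b|) g + f with b = Bf f g and t real.\<close>
lemma hermitian_form_Cauchy_Schwarz:
  assumes form: "hermitian_form V Bf"
    and pos: "\<And>f. f \<in> V \<Longrightarrow> 0 \<le> Re (Bf f f)"
    and f: "f \<in> V" and g: "g \<in> V"
  shows "(cmod (Bf f g))\<^sup>2 \<le> Re (Bf f f) * Re (Bf g g)"
proof -
  define b where "b = Bf f g"
  have "0 \<le> Re (Bf f f) + 2 * t * cmod b + t\<^sup>2 * Re (Bf g g)" for t :: real
  proof -
    define s where "s = (if b = 0 then of_real t else of_real t * cnj b / of_real (cmod b))"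
    have sb: "Re (s * b) = t * cmod b"
    proof (cases "b = 0")
      case False
      have "s * b = of_real t * (cnj b * b) / of_real (cmod b)" by (simp add: s_def False)
      also have "\<dots> = of_real (t * cmod b)"
        using False by (simp add: cnj_mult_self power2_eq_square del: of_real_power)
      finally show ?thesis by simp
    qed (simp add: s_def)
    have cs: "(cmod s)\<^sup>2 = t\<^sup>2"
      by (cases "b = 0") (simp_all add: s_def norm_mult norm_divide power2_eq_square)
    have "0 \<le> Re (Bf (\<lambda>x. s * g x + f x) (\<lambda>x. s * g x + f x))"
      by (intro pos hf_closed[OF form g f])
    then show ?thesis unfolding hf_quadratic_Re[OF form f g] b_def[symmetric] sb cs by simp
  qed
  then show ?thesis
    unfolding b_def by (rule quadratic_nonneg_discriminant[OF _ pos[OF g]])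
qed

lemma ip_hermitian_form: "hermitian_form (L2 M) (ip M)"
  unfolding hermitian_form_def using L2_lin ip_cnj ip_lin_right by blast

lemma ip_Cauchy_Schwarz:
  assumes "f \<in> L2 M" "g \<in> L2 M"
  shows "cmod (ip M f g) \<le> sqrt (nrm2 M f) * sqrt (nrm2 M g)"
proof -
  have "(cmod (ip M f g))\<^sup>2 \<le> nrm2 M f * nrm2 M g"
    using hermitian_form_Cauchy_Schwarz[OF ip_hermitian_form _ assms]
    by (simp add: ip_self nrm2_nonneg)
  then show ?thesis using real_le_rsqrt real_sqrt_mult by metis
qed


section \<open>Orthonormal bases and Bessel's inequality\<close>

lemma ip_sum_right:
  assumes "f \<in> L2 M" "finite F" "\<And>i. i \<in> F \<Longrightarrow> u i \<in> L2 M"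
  shows "ip M f (\<lambda>x. \<Sum>i\<in>F. a i * u i x) = (\<Sum>i\<in>F. a i * ip M f (u i))"
  using assms(2,3)
proof (induction F rule: finite_induct)
  case empty
  then show ?case by (simp add: ip_zero_right)
next
  case (insert j F)
  have "(\<lambda>x. \<Sum>i\<in>F. a i * u i x) \<in> L2 M"
    using insert by (intro L2_sum) (auto intro: L2_scale)
  then show ?case
    using insert ip_lin_right[OF assms(1), of "u j" "\<lambda>x. \<Sum>i\<in>F. a i * u i x" "a j"] by simp
qed

lemma ip_sum_left:
  assumes "f \<in> L2 M" "finite F" "\<And>i. i \<in> F \<Longrightarrow> u i \<in> L2 M"
  shows "ip M (\<lambda>x. \<Sum>i\<in>F. a i * u i x) f = (\<Sum>i\<in>F. cnj (a i) * ip M (u i) f)"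
  by (subst (1 2) ip_cnj) (simp add: ip_sum_right[OF assms] cnj_sum)

lemma onbD:
  assumes "onb M B"
  shows "B \<subseteq> L2 M" "\<And>e. e \<in> B \<Longrightarrow> ip M e e = 1"
    "\<And>e e'. e \<in> B \<Longrightarrow> e' \<in> B \<Longrightarrow> e \<noteq> e' \<Longrightarrow> ip M e e' = 0"
    "\<And>f. f \<in> L2 M \<Longrightarrow> (\<And>e. e \<in> B \<Longrightarrow> ip M e f = 0) \<Longrightarrow> ip M f f = 0"
  using assms unfolding onb_def by auto

lemma onb_coefficients_eq_AE:
  assumes B: "onb M B" and f: "f \<in> L2 M" and g: "g \<in> L2 M"
    and coeff: "\<And>e. e \<in> B \<Longrightarrow> ip M e f = ip M e g"
  shows "AE x in M. f x = g x"
proof -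
  have d: "(\<lambda>x. f x - g x) \<in> L2 M" by (rule L2_diff[OF f g])
  have "ip M e (\<lambda>x. f x - g x) = 0" if "e \<in> B" for e
    using that onbD(1)[OF B] coeff[OF that] by (simp add: ip_diff_right f g subset_iff)
  then have "nrm2 M (\<lambda>x. f x - g x) = 0"
    using onbD(4)[OF B d] by (simp add: ip_self)
  then show ?thesis using nrm2_eq_0_AE[OF d] by auto
qed

definition proj :: "'a measure \<Rightarrow> ('a \<Rightarrow> complex) \<Rightarrow> ('a \<Rightarrow> complex) set \<Rightarrow> ('a \<Rightarrow> complex)" where
  "proj M h F = (\<lambda>x. \<Sum>e\<in>F. ip M e h * e x)"

context
  fixes M B h
  assumes B: "onb M B" and h: "h \<in> L2 M"
begin

lemma proj_L2: "finite F \<Longrightarrow> F \<subseteq> B \<Longrightarrow> proj M h F \<in> L2 M"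
  unfolding proj_def using onbD(1)[OF B] by (intro L2_sum) (auto intro!: L2_scale)

lemma ip_basis_proj:
  assumes "finite F" "F \<subseteq> B" "e \<in> B"
  shows "ip M e (proj M h F) = (if e \<in> F then ip M e h else 0)"
proof -
  have eL: "e \<in> L2 M" using assms onbD(1)[OF B] by auto
  have "ip M e (proj M h F) = (\<Sum>e'\<in>F. ip M e' h * ip M e e')"
    unfolding proj_def using assms onbD(1)[OF B] by (intro ip_sum_right[OF eL]) auto
  also have "\<dots> = (\<Sum>e'\<in>F. if e' = e then ip M e' h else 0)"
    using assms onbD(2,3)[OF B] by (intro sum.cong) auto
  finally show ?thesis using assms(1) by (simp add: sum.delta')
qed

lemma ip_proj_left:
  assumes "finite F" "F \<subseteq> B" "g \<in> L2 M"
  shows "ip M (proj M h F) g = (\<Sum>e\<in>F. cnj (ip M e h) * ip M e g)"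
  unfolding proj_def using assms onbD(1)[OF B] by (intro ip_sum_left) auto

lemma nrm2_proj:
  assumes "finite F" "F \<subseteq> B"
  shows "nrm2 M (proj M h F) = (\<Sum>e\<in>F. (cmod (ip M e h))\<^sup>2)"
proof -
  have "ip M (proj M h F) (proj M h F) = (\<Sum>e\<in>F. cnj (ip M e h) * ip M e h)"
    unfolding ip_proj_left[OF assms proj_L2[OF assms]] using assms
    using assms by (intro sum.cong refl) (auto simp: ip_basis_proj[OF assms])
  then have "complex_of_real (nrm2 M (proj M h F))
      = complex_of_real (\<Sum>e\<in>F. (cmod (ip M e h))\<^sup>2)"
    by (simp add: ip_self cnj_mult_self del: of_real_power)
  then show ?thesis by (simp only: of_real_eq_iff)
qed

text \<open>Pythagoras for h = proj h F + (h - proj h F).\<close>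
lemma nrm2_diff_proj:
  assumes "finite F" "F \<subseteq> B"
  shows "nrm2 M (\<lambda>x. h x - proj M h F x) = nrm2 M h - (\<Sum>e\<in>F. (cmod (ip M e h))\<^sup>2)"
proof -
  let ?P = "proj M h F" and ?s = "complex_of_real (\<Sum>e\<in>F. (cmod (ip M e h))\<^sup>2)"
  have P: "?P \<in> L2 M" by (rule proj_L2[OF assms])
  have Ph: "ip M ?P h = ?s"
    unfolding ip_proj_left[OF assms h] by (simp add: cnj_mult_self del: of_real_power)
  have PP: "ip M ?P ?P = ?s"
    using nrm2_proj[OF assms] by (simp add: ip_self)
  have "ip M (\<lambda>x. h x - ?P x) (\<lambda>x. h x - ?P x)
      = (ip M h h - ip M h ?P) - (ip M ?P h - ip M ?P ?P)"
    by (simp add: ip_diff_left ip_diff_right L2_diff P h)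
  also have "\<dots> = ip M h h - ?s"
    unfolding ip_cnj[of M h ?P] Ph PP by simp
  finally have "complex_of_real (nrm2 M (\<lambda>x. h x - ?P x))
      = complex_of_real (nrm2 M h - (\<Sum>e\<in>F. (cmod (ip M e h))\<^sup>2))"
    by (simp only: ip_self of_real_diff)
  then show ?thesis by (simp only: of_real_eq_iff)
qed

lemma bessel_inequality:
  assumes "finite F" "F \<subseteq> B"
  shows "(\<Sum>e\<in>F. (cmod (ip M e h))\<^sup>2) \<le> nrm2 M h"
  using nrm2_diff_proj[OF assms] nrm2_nonneg[of M "\<lambda>x. h x - proj M h F x"] by simp

lemma fourier_coefficients_summable: "(\<lambda>e. (cmod (ip M e h))\<^sup>2) summable_on B"
  by (rule nonneg_bdd_above_summable_on)
    (auto intro!: bdd_aboveI[of _ "nrm2 M h"] bessel_inequality)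

end


section \<open>Completeness of L2 over a probability space\<close>

text \<open>On a probability space the L1 norm is dominated by the L2 norm (Cauchy-Schwarz
  against the constant function 1); in particular L2 functions are integrable.\<close>
lemma L1_le_L2:
  assumes prob: "prob_space M" and d: "d \<in> L2 M"
  shows "(LINT x|M. cmod (d x)) \<le> sqrt (nrm2 M d)"
proof -
  have abs_d: "(\<lambda>x. complex_of_real (cmod (d x))) \<in> L2 M"
    using L2_measurable[OF d] L2_integrable_sq[OF d] by (intro L2I) auto
  have one: "(\<lambda>x. 1::complex) \<in> L2 M"
    using prob by (intro L2_const) (simp add: prob_space.finite_measure)
  have "ip M (\<lambda>x. complex_of_real (cmod (d x))) (\<lambda>x. 1) = complex_of_real (LINT x|M. cmod (d x))"
    unfolding ip_def by simp
  moreover have "nrm2 M (\<lambda>x. 1) = 1"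
    unfolding nrm2_def using prob by (simp add: prob_space.prob_space)
  moreover have "nrm2 M (\<lambda>x. complex_of_real (cmod (d x))) = nrm2 M d"
    unfolding nrm2_def by simp
  ultimately show ?thesis using ip_Cauchy_Schwarz[OF abs_d one] by simp
qed

lemma L2_integrable:
  assumes prob: "prob_space M" and f: "f \<in> L2 M"
  shows "integrable M f"
proof -
  have one: "(\<lambda>x. 1::complex) \<in> L2 M"
    using prob by (intro L2_const) (simp add: prob_space.finite_measure)
  have "integrable M (\<lambda>x. cnj (cnj (f x) * 1))"
    using L2_cnj_mult_integrable[OF f one] by (rule integrable_cnj)
  then show ?thesis by simp
qed

text \<open>A sequence whose consecutive L2 distances decay like (1/4)^j converges a.e.:
  the series of the increments converges absolutely in L1, hence a.e.\<close>
lemma L2_fast_Cauchy_AE_convergent: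
  assumes prob: "prob_space M" and g: "\<And>j. g j \<in> L2 M"
    and fast: "\<And>j. nrm2 M (\<lambda>x. g (Suc j) x - g j x) \<le> (1/4)^j"
  shows "AE x in M. convergent (\<lambda>j. g j x)"
proof -
  define d where "d j = (\<lambda>x. g (Suc j) x - g j x)" for j
  have dL: "d j \<in> L2 M" for j unfolding d_def by (intro L2_diff g)
  have [measurable]: "d j \<in> borel_measurable M" for j using dL L2_measurable by blast
  have L1: "(\<integral>\<^sup>+x. ennreal (cmod (d j x)) \<partial>M) \<le> ennreal ((1/2)^j)" for j
  proof -
    have "(LINT x|M. cmod (d j x)) \<le> sqrt (nrm2 M (d j))" by (rule L1_le_L2[OF prob dL])
    also have "\<dots> \<le> sqrt ((1/4)^j)" using fast[of j] by (simp add: d_def)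
    also have "sqrt ((1/4)^j) = (1/2::real)^j"
      by (simp add: real_sqrt_power real_sqrt_divide)
    finally have "(LINT x|M. cmod (d j x)) \<le> (1/2)^j" .
    moreover have "integrable M (\<lambda>x. cmod (d j x))"
      using L2_integrable[OF prob dL] by (rule integrable_norm)
    ultimately show ?thesis by (simp add: nn_integral_eq_integral ennreal_leI)
  qed
  have "(\<integral>\<^sup>+x. (\<Sum>j. ennreal (cmod (d j x))) \<partial>M) = (\<Sum>j. \<integral>\<^sup>+x. ennreal (cmod (d j x)) \<partial>M)"
    by (intro nn_integral_suminf) measurable
  also have "\<dots> \<le> (\<Sum>j. ennreal ((1/2)^j))"
    by (intro suminf_le summableI L1)
  also have "\<dots> = ennreal (\<Sum>j. (1/2)^j)"
    by (intro suminf_ennreal2) (auto intro: summable_geometric)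
  finally have "(\<integral>\<^sup>+x. (\<Sum>j. ennreal (cmod (d j x))) \<partial>M) \<noteq> \<infinity>"
    by (auto simp: top_unique)
  then have "AE x in M. (\<Sum>j. ennreal (cmod (d j x))) \<noteq> \<infinity>"
    by (intro nn_integral_PInf_AE) measurable
  then show ?thesis
  proof (rule AE_mp, intro AE_I2 impI)
    fix x assume "(\<Sum>j. ennreal (cmod (d j x))) \<noteq> \<infinity>"
    then have "summable (\<lambda>j. cmod (d j x))" by (intro summable_suminf_not_top) auto
    then have "summable (\<lambda>j. d j x)" by (rule summable_norm_cancel)
    then have "convergent (\<lambda>n. g 0 x + (\<Sum>j<n. d j x))"
      by (intro convergent_add convergent_const) (simp add: summable_iff_convergent)
    moreover have "g 0 x + (\<Sum>j<n. d j x) = g n x" for n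
      unfolding d_def using sum_lessThan_telescope[of "\<lambda>j. g j x" n] by simp
    ultimately show "convergent (\<lambda>j. g j x)" by simp
  qed
qed

text \<open>Fatou's lemma for the L2 distance: an a.e. limit G of functions eventually within
  squared distance c of f is itself within squared distance c of f.\<close>
lemma L2_Fatou:
  assumes g: "\<And>m. g m \<in> L2 M" and f: "f \<in> L2 M" and G: "G \<in> borel_measurable M"
    and lim: "AE x in M. (\<lambda>m. g m x) \<longlonglongrightarrow> G x"
    and close: "eventually (\<lambda>m. nrm2 M (\<lambda>x. g m x - f x) \<le> c) sequentially"
  shows "(\<lambda>x. G x - f x) \<in> L2 M" "nrm2 M (\<lambda>x. G x - f x) \<le> c"
proof -
  have [measurable]: "f \<in> borel_measurable M" "g m \<in> borel_measurable M" for m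
    using f g by (auto intro: L2_measurable)
  note [measurable] = G
  have "AE x in M. ennreal ((cmod (G x - f x))\<^sup>2)
      = liminf (\<lambda>m. ennreal ((cmod (g m x - f x))\<^sup>2))"
    using lim by eventually_elim (intro lim_imp_Liminf[symmetric] tendsto_intros, auto)
  then have "(\<integral>\<^sup>+x. ennreal ((cmod (G x - f x))\<^sup>2) \<partial>M)
      = (\<integral>\<^sup>+x. liminf (\<lambda>m. ennreal ((cmod (g m x - f x))\<^sup>2)) \<partial>M)"
    by (rule nn_integral_cong_AE)
  also have "\<dots> \<le> liminf (\<lambda>m. \<integral>\<^sup>+x. ennreal ((cmod (g m x - f x))\<^sup>2) \<partial>M)"
    by (intro nn_integral_liminf) measurable
  also have "\<dots> \<le> ennreal c"
  proof (intro Liminf_le)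
    show "\<forall>\<^sub>F m in sequentially. (\<integral>\<^sup>+x. ennreal ((cmod (g m x - f x))\<^sup>2) \<partial>M) \<le> ennreal c"
      using close by eventually_elim (simp add: nrm2_nn_integral[OF L2_diff[OF g f]] ennreal_leI)
  qed simp
  finally have bound: "(\<integral>\<^sup>+x. ennreal ((cmod (G x - f x))\<^sup>2) \<partial>M) \<le> ennreal c" .
  show L: "(\<lambda>x. G x - f x) \<in> L2 M"
  proof (rule L2I)
    show "integrable M (\<lambda>x. (cmod (G x - f x))\<^sup>2)"
    proof (rule integrableI_bounded)
      show "(\<integral>\<^sup>+x. ennreal (norm ((cmod (G x - f x))\<^sup>2)) \<partial>M) < \<infinity>"
        using bound by (simp add: le_less_trans)
    qed measurable
  qed measurable
  obtain m where "nrm2 M (\<lambda>x. g m x - f x) \<le> c"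
    using close unfolding eventually_sequentially by blast
  then have "0 \<le> c" using nrm2_nonneg order_trans by blast
  then show "nrm2 M (\<lambda>x. G x - f x) \<le> c"
    using bound nrm2_nn_integral[OF L] by simp
qed

text \<open>Riesz-Fischer: every L2-Cauchy sequence has an L2 limit.  A subsequence with
  geometrically decaying increments converges a.e.; its limit is the L2 limit by Fatou.\<close>
lemma L2_complete:
  assumes prob: "prob_space M" and g: "\<And>n. g n \<in> L2 M"
    and cauchy: "\<And>\<epsilon>. \<epsilon> > 0 \<Longrightarrow> \<exists>N. \<forall>m\<ge>N. \<forall>n\<ge>N. nrm2 M (\<lambda>x. g m x - g n x) < \<epsilon>"
  shows "\<exists>G\<in>L2 M. (\<lambda>n. nrm2 M (\<lambda>x. G x - g n x)) \<longlonglongrightarrow> 0"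
proof -
  have "\<forall>j. \<exists>N. \<forall>m\<ge>N. \<forall>n\<ge>N. nrm2 M (\<lambda>x. g m x - g n x) < (1/4)^j"
    using cauchy by simp
  then obtain N0 where N0: "\<And>j m n. m \<ge> N0 j \<Longrightarrow> n \<ge> N0 j \<Longrightarrow> nrm2 M (\<lambda>x. g m x - g n x) < (1/4)^j"
    by metis
  define N where "N j = (\<Sum>i\<le>j. N0 i)" for j
  have N0N: "N0 j \<le> N j" for j unfolding N_def by (rule member_le_sum) auto
  have Nmono: "N i \<le> N j" if "i \<le> j" for i j
    unfolding N_def using that by (intro sum_mono2) auto
  have Nclose: "nrm2 M (\<lambda>x. g m x - g (N j) x) < (1/4)^j" if "m \<ge> N j" for m j
    using N0 N0N that order_trans by blast
  have "AE x in M. convergent (\<lambda>j. g (N j) x)"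
    using Nclose[OF Nmono, of j "Suc j" for j]
    by (intro L2_fast_Cauchy_AE_convergent[OF prob g]) (simp add: less_imp_le)
  then have lim: "AE x in M. (\<lambda>j. g (N j) x) \<longlonglongrightarrow> lim (\<lambda>j. g (N j) x)"
    by eventually_elim (simp add: convergent_LIMSEQ_iff)
  define G where "G x = lim (\<lambda>j. g (N j) x)" for x
  have "G \<in> borel_measurable M"
    unfolding G_def using g by (measurable, auto intro: L2_measurable)
  then have GN: "(\<lambda>x. G x - g (N j) x) \<in> L2 M \<and> nrm2 M (\<lambda>x. G x - g (N j) x) \<le> (1/4)^j" for j
  proof -
    have "eventually (\<lambda>i. nrm2 M (\<lambda>x. g (N i) x - g (N j) x) \<le> (1/4)^j) sequentially"
      using Nclose Nmono by (intro eventually_sequentiallyI[of j] less_imp_le) auto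
    then show ?thesis
      using L2_Fatou[of "\<lambda>i. g (N i)" M "g (N j)" G "(1/4)^j"] g \<open>G \<in> borel_measurable M\<close> lim
      unfolding G_def by blast
  qed
  have GL: "G \<in> L2 M"
    using L2_add[OF conjunct1[OF GN[of 0]] g[of "N 0"]] by simp
  have "(\<lambda>n. nrm2 M (\<lambda>x. G x - g n x)) \<longlonglongrightarrow> 0"
    unfolding LIMSEQ_iff
  proof (intro allI impI)
    fix r :: real assume r: "r > 0"
    obtain j where j: "(1/4::real)^j < r/4" using real_arch_pow_inv[of "r/4" "1/4"] r by auto
    have "nrm2 M (\<lambda>x. G x - g n x) < r" if n: "n \<ge> N j" for n
    proof -
      have "nrm2 M (\<lambda>x. (G x - g (N j) x) + (g (N j) x - g n x))
          \<le> 2 * nrm2 M (\<lambda>x. G x - g (N j) x) + 2 * nrm2 M (\<lambda>x. g (N j) x - g n x)"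
        by (rule nrm2_add_le[OF conjunct1[OF GN[of j]] L2_diff[OF g g]])
      moreover have "nrm2 M (\<lambda>x. g (N j) x - g n x) < (1/4)^j"
        using N0[of j "N j" n] N0N[of j] n by simp
      ultimately show ?thesis using GN[of j] j by simp
    qed
    then show "\<exists>n0. \<forall>n\<ge>n0. norm (nrm2 M (\<lambda>x. G x - g n x) - 0) < r"
      using nrm2_nonneg[of M] by (metis abs_of_nonneg diff_zero real_norm_def)
  qed
  with GL show ?thesis by blast
qed


section \<open>Parseval's identity\<close>

lemma countable_finite_exhaustion:
  assumes "countable C"
  obtains F :: "nat \<Rightarrow> 'b set"
  where "\<And>n. finite (F n)" "\<And>n. F n \<subseteq> C" "incseq F" "\<And>e. e \<in> C \<Longrightarrow> \<exists>n. e \<in> F n"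
proof
  define F where "F n = C \<inter> from_nat_into C ` {..<n}" for n
  show "finite (F n)" "F n \<subseteq> C" for n unfolding F_def by auto
  show "incseq F" unfolding F_def incseq_def by auto
  show "\<exists>n. e \<in> F n" if e: "e \<in> C" for e
  proof -
    obtain n where "from_nat_into C n = e" using from_nat_into_surj[OF assms e] by blast
    then have "e \<in> F (Suc n)" unfolding F_def using e by auto
    then show ?thesis ..
  qed
qed

lemma has_sum_diff:
  fixes f g :: "'b \<Rightarrow> 'c::topological_ab_group_add"
  assumes "(f has_sum a) A" "(g has_sum b) A"
  shows "((\<lambda>x. f x - g x) has_sum (a - b)) A"
proof -
  have "((\<lambda>x. - g x) has_sum - b) A" using assms(2) by (simp add: has_sum_uminus)
  from has_sum_add[OF assms(1) this] show ?thesis by simp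
qed

lemma ip_tendsto_right:
  assumes e: "e \<in> L2 M" and P: "\<And>n. P n \<in> L2 M" and G: "G \<in> L2 M"
    and lim: "(\<lambda>n. nrm2 M (\<lambda>x. G x - P n x)) \<longlonglongrightarrow> 0"
  shows "(\<lambda>n. ip M e (P n)) \<longlonglongrightarrow> ip M e G"
proof -
  have bound: "norm (ip M e G - ip M e (P n)) \<le> sqrt (nrm2 M e) * sqrt (nrm2 M (\<lambda>x. G x - P n x))"
    for n
    unfolding ip_diff_right[OF e G P, symmetric] by (rule ip_Cauchy_Schwarz[OF e L2_diff[OF G P]])
  have "(\<lambda>n. sqrt (nrm2 M (\<lambda>x. G x - P n x))) \<longlonglongrightarrow> sqrt 0"
    by (rule tendsto_real_sqrt[OF lim])
  then have "(\<lambda>n. sqrt (nrm2 M e) * sqrt (nrm2 M (\<lambda>x. G x - P n x))) \<longlonglongrightarrow> 0"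
    using tendsto_mult_left[of _ 0 sequentially "sqrt (nrm2 M e)"] by simp
  then have "(\<lambda>n. ip M e G - ip M e (P n)) \<longlonglongrightarrow> 0"
    by (rule Lim_null_comparison[OF always_eventually[OF allI[OF bound]]])
  then have "(\<lambda>n. ip M e G - (ip M e G - ip M e (P n))) \<longlonglongrightarrow> ip M e G - 0"
    by (intro tendsto_diff tendsto_const)
  then show ?thesis by simp
qed

text \<open>Partial Fourier sums along an increasing sequence of finite sets of basis vectors
  form an L2-Cauchy sequence: their squared distances are tails of Bessel's sum.\<close>
lemma proj_Cauchy:
  assumes B: "onb M B" and h: "h \<in> L2 M"
    and F: "\<And>n. finite (F n)" "\<And>n. F n \<subseteq> B" "incseq F" and \<epsilon>: "\<epsilon> > 0"
  shows "\<exists>N. \<forall>m\<ge>N. \<forall>n\<ge>N. nrm2 M (\<lambda>x. proj M h (F m) x - proj M h (F n) x) < \<epsilon>"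
proof -
  define s where "s n = (\<Sum>e\<in>F n. (cmod (ip M e h))\<^sup>2)" for n
  have dist: "nrm2 M (\<lambda>x. proj M h (F m) x - proj M h (F n) x) = s m - s n" if "n \<le> m" for n m
  proof -
    have sub: "F n \<subseteq> F m" using \<open>incseq F\<close> that by (simp add: incseq_def)
    have "(\<lambda>x. proj M h (F m) x - proj M h (F n) x) = proj M h (F m - F n)"
      unfolding proj_def using sub F(1) by (simp add: sum_diff)
    then show ?thesis
      using nrm2_proj[OF B h, of "F m - F n"] F sub by (auto simp: s_def sum_diff)
  qed
  have "incseq s"
    unfolding incseq_def s_def using F by (auto intro!: sum_mono2 dest: monoD)
  moreover have "s n \<le> nrm2 M h" for n
    unfolding s_def by (rule bessel_inequality[OF B h F(1,2)])
  ultimately obtain L where "s \<longlonglongrightarrow> L" using incseq_convergent by blast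
  then obtain N where N: "\<And>m n. m \<ge> N \<Longrightarrow> n \<ge> N \<Longrightarrow> norm (s m - s n) < \<epsilon>"
    using CauchyD[OF LIMSEQ_imp_Cauchy \<epsilon>] by blast
  have "nrm2 M (\<lambda>x. proj M h (F m) x - proj M h (F n) x) < \<epsilon>" if "m \<ge> N" "n \<ge> N" for m n
  proof (cases "n \<le> m")
    case True
    then show ?thesis using dist N[OF that] by simp
  next
    case False
    then show ?thesis
      using dist[of m n] N[OF that(2,1)] nrm2_diff_commute[of M "proj M h (F m)"] by simp
  qed
  then show ?thesis by blast
qed

text \<open>If the finite sets exhaust the basis vectors with nonzero coefficient, the partial
  Fourier sums converge to h in L2: their limit (which exists by completeness) has the same
  Fourier coefficients as h.\<close>
lemma proj_tendsto:
  assumes prob: "prob_space M" and B: "onb M B" and h: "h \<in> L2 M"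
    and F: "\<And>n. finite (F n)" "\<And>n. F n \<subseteq> B" "incseq F"
    and exhaust: "\<And>e. e \<in> B \<Longrightarrow> ip M e h \<noteq> 0 \<Longrightarrow> \<exists>n. e \<in> F n"
  shows "(\<lambda>n. nrm2 M (\<lambda>x. h x - proj M h (F n) x)) \<longlonglongrightarrow> 0"
proof -
  let ?P = "\<lambda>n. proj M h (F n)"
  have P: "?P n \<in> L2 M" for n by (rule proj_L2[OF B h F(1,2)])
  obtain G where G: "G \<in> L2 M" and GP: "(\<lambda>n. nrm2 M (\<lambda>x. G x - ?P n x)) \<longlonglongrightarrow> 0"
    using L2_complete[OF prob P proj_Cauchy[OF B h F]] by blast
  have "ip M e h = ip M e G" if e: "e \<in> B" for e
  proof -
    have eL: "e \<in> L2 M" using e onbD(1)[OF B] by auto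
    have "\<forall>\<^sub>F n in sequentially. ip M e (?P n) = ip M e h"
    proof (cases "ip M e h = 0")
      case True
      then show ?thesis by (simp add: ip_basis_proj[OF B h F(1,2) e])
    next
      case False
      then obtain n0 where "e \<in> F n0" using exhaust[OF e] by blast
      then have "e \<in> F n" if "n \<ge> n0" for n using monoD[OF \<open>incseq F\<close> that] by auto
      then show ?thesis
        by (intro eventually_sequentiallyI[of n0]) (simp add: ip_basis_proj[OF B h F(1,2) e])
    qed
    then have "(\<lambda>n. ip M e (?P n)) \<longlonglongrightarrow> ip M e h" by (rule tendsto_eventually)
    then show ?thesis using ip_tendsto_right[OF eL P G GP] LIMSEQ_unique by blast
  qed
  then have "AE x in M. h x = G x" by (rule onb_coefficients_eq_AE[OF B h G])
  then have "nrm2 M (\<lambda>x. h x - ?P n x) = nrm2 M (\<lambda>x. G x - ?P n x)" for n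
    by (intro nrm2_cong_AE L2_diff h G P) auto
  then show ?thesis using GP by simp
qed

lemma parseval:
  assumes prob: "prob_space M" and B: "onb M B" and h: "h \<in> L2 M"
  shows "((\<lambda>e. (cmod (ip M e h))\<^sup>2) has_sum nrm2 M h) B"
proof -
  define w where "w e = (cmod (ip M e h))\<^sup>2" for e
  have wsum: "w summable_on B" unfolding w_def by (rule fourier_coefficients_summable[OF B h])
  define C where "C = {e\<in>B. w e \<noteq> 0}"
  have "countable C" unfolding C_def by (rule summable_countable_real[OF wsum])
  then obtain F where F: "\<And>n. finite (F n)" "\<And>n. F n \<subseteq> C" "incseq F"
    and exhaust: "\<And>e. e \<in> C \<Longrightarrow> \<exists>n. e \<in> F n"
    by (rule countable_finite_exhaustion) blast
  have FB: "F n \<subseteq> B" for n using F(2) unfolding C_def by blast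
  have "(\<lambda>n. nrm2 M (\<lambda>x. h x - proj M h (F n) x)) \<longlonglongrightarrow> 0"
    using exhaust by (intro proj_tendsto[OF prob B h F(1) FB F(3)]) (simp add: C_def w_def)
  moreover have "nrm2 M (\<lambda>x. h x - proj M h (F n) x) = nrm2 M h - (\<Sum>e\<in>F n. w e)" for n
    unfolding w_def by (rule nrm2_diff_proj[OF B h F(1) FB])
  ultimately have "(\<lambda>n. nrm2 M h - (nrm2 M h - (\<Sum>e\<in>F n. w e))) \<longlonglongrightarrow> nrm2 M h - 0"
    by (intro tendsto_diff tendsto_const) simp
  then have partial: "(\<lambda>n. \<Sum>e\<in>F n. w e) \<longlonglongrightarrow> nrm2 M h" by simp
  have "(\<Sum>e\<in>F n. w e) \<le> infsum w B" for n
  proof -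
    have "(\<Sum>e\<in>F n. w e) = infsum w (F n)" using F(1) by simp
    also have "\<dots> \<le> infsum w B"
      using F(1) FB wsum by (intro infsum_mono2) (auto simp: w_def)
    finally show ?thesis .
  qed
  then have "nrm2 M h \<le> infsum w B" using partial by (intro LIMSEQ_le_const2) auto
  moreover have "infsum w B \<le> nrm2 M h"
    using wsum by (rule infsum_le_finite_sums) (simp add: w_def bessel_inequality[OF B h])
  ultimately show ?thesis using wsum unfolding w_def by (simp add: has_sum_iff)
qed

lemma polarization:
  "cnj a * b = (complex_of_real ((cmod (b + a))\<^sup>2) - complex_of_real ((cmod (-b + a))\<^sup>2)
     - \<i> * (complex_of_real ((cmod (\<i> * b + a))\<^sup>2) - complex_of_real ((cmod (-\<i> * b + a))\<^sup>2))) / 4"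
  unfolding cmod_power2 by (simp add: complex_eq_iff power2_eq_square algebra_simps del: of_real_power)

text \<open>The inner product on c g + f, expanded; combined for c = 1, -1, i, -i it gives
  the polarization identity.\<close>
lemma ip_quadratic:
  assumes f: "f \<in> L2 M" and g: "g \<in> L2 M"
  shows "ip M (\<lambda>x. c * g x + f x) (\<lambda>x. c * g x + f x)
     = cnj c * (c * ip M g g + ip M g f) + (c * ip M f g + ip M f f)"
  using hf_lin_left[OF ip_hermitian_form L2_lin[OF g f] g f, of c]
    ip_lin_right[OF g g f, of c] ip_lin_right[OF f g f, of c] by simp

lemma parseval_polar:
  assumes prob: "prob_space M" and B: "onb M B" and f: "f \<in> L2 M" and g: "g \<in> L2 M"
  shows "((\<lambda>e. cnj (ip M e f) * ip M e g) has_sum ip M f g) B"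
proof -
  define h where "h c = (\<lambda>x. c * g x + f x)" for c
  have hL: "h c \<in> L2 M" for c unfolding h_def by (rule L2_lin[OF g f])
  have coeff: "ip M e (h c) = c * ip M e g + ip M e f" if "e \<in> B" for e c
    unfolding h_def using onbD(1)[OF B] that by (intro ip_lin_right g f) auto
  have sq: "((\<lambda>e. complex_of_real ((cmod (ip M e (h c)))\<^sup>2)) has_sum ip M (h c) (h c)) B" for c
    unfolding ip_self by (intro has_sum_of_real parseval[OF prob B hL])
  have "((\<lambda>e. complex_of_real ((cmod (ip M e (h 1)))\<^sup>2) - complex_of_real ((cmod (ip M e (h (-1))))\<^sup>2)
     - \<i> * (complex_of_real ((cmod (ip M e (h \<i>)))\<^sup>2) - complex_of_real ((cmod (ip M e (h (-\<i>))))\<^sup>2)))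
     has_sum (ip M (h 1) (h 1) - ip M (h (-1)) (h (-1))
        - \<i> * (ip M (h \<i>) (h \<i>) - ip M (h (-\<i>)) (h (-\<i>))))) B"
    by (intro has_sum_diff has_sum_cmult_right sq)
  from has_sum_cmult_left[OF this, of "1/4"]
  have "((\<lambda>e. cnj (ip M e f) * ip M e g) has_sum (ip M (h 1) (h 1) - ip M (h (-1)) (h (-1))
        - \<i> * (ip M (h \<i>) (h \<i>) - ip M (h (-\<i>)) (h (-\<i>)))) * (1/4)) B"
    by (rule has_sum_cong[THEN iffD1, rotated]) (simp add: coeff polarization)
  moreover have "(ip M (h 1) (h 1) - ip M (h (-1)) (h (-1))
      - \<i> * (ip M (h \<i>) (h \<i>) - ip M (h (-\<i>)) (h (-\<i>)))) * (1/4) = ip M f g"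
    unfolding h_def ip_quadratic[OF f g] by (simp add: algebra_simps)
  ultimately show ?thesis by simp
qed


section \<open>Bounded positive operators\<close>

context
  fixes M :: "'a measure" and T :: "('a \<Rightarrow> complex) \<Rightarrow> ('a \<Rightarrow> complex)"
  assumes op: "is_operator M T"
begin

lemma operator_L2: "f \<in> L2 M \<Longrightarrow> T f \<in> L2 M"
  using op unfolding is_operator_def by blast

lemma operator_bounded: "\<exists>K\<ge>0. \<forall>f\<in>L2 M. nrm2 M (T f) \<le> K * nrm2 M f"
proof -
  have "\<exists>K. \<forall>f\<in>L2 M. nrm2 M (T f) \<le> K * nrm2 M f"
    using op unfolding is_operator_def by (simp add: ip_self)
  then obtain K where K: "\<And>f. f \<in> L2 M \<Longrightarrow> nrm2 M (T f) \<le> K * nrm2 M f" by blast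
  have "nrm2 M (T f) \<le> max K 0 * nrm2 M f" if "f \<in> L2 M" for f
    using K[OF that] mult_right_mono[OF max.cobounded1 nrm2_nonneg] by (metis order_trans)
  then show ?thesis by (intro exI[of _ "max K 0"]) auto
qed

text \<open>The form (f, g) \<mapsto> <f, T g> is linear in g (T is linear up to null functions).\<close>
lemma operator_form_lin_right:
  assumes f: "f \<in> L2 M" and g: "g \<in> L2 M" and h: "h \<in> L2 M"
  shows "ip M f (T (\<lambda>x. c * g x + h x)) = c * ip M f (T g) + ip M f (T h)"
proof -
  have "AE x in M. T (\<lambda>y. c * g y + h y) x = c * T g x + T h x"
    using op g h unfolding is_operator_def by blast
  then have "ip M f (T (\<lambda>x. c * g x + h x)) = ip M f (\<lambda>x. c * T g x + T h x)"
    by (intro ip_cong_AE_right f operator_L2 L2_lin g h)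
  also have "\<dots> = c * ip M f (T g) + ip M f (T h)"
    by (intro ip_lin_right f operator_L2 g h)
  finally show ?thesis .
qed

text \<open>A positive operator is symmetric: reality of <u, T u> for u = g + f and u = i g + f
  forces <g, T f> = cnj <f, T g>.\<close>
lemma positive_operator_form:
  assumes pos: "positive_op M T"
  shows "hermitian_form (L2 M) (\<lambda>f g. ip M f (T g))"
proof -
  have real: "Im (ip M u (T u)) = 0" if "u \<in> L2 M" for u
    using pos that unfolding positive_op_def by (simp add: complex_is_Real_iff)
  have herm: "ip M g (T f) = cnj (ip M f (T g))" if f: "f \<in> L2 M" and g: "g \<in> L2 M" for f g
  proof -
    have expand: "ip M (\<lambda>x. c * g x + f x) (T (\<lambda>x. c * g x + f x))
        = cnj c * (c * ip M g (T g) + ip M g (T f)) + (c * ip M f (T g) + ip M f (T f))" for c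
      using ip_lin_left[OF operator_L2[OF L2_lin[OF g f]] g f, of c]
        operator_form_lin_right[OF g g f, of c] operator_form_lin_right[OF f g f, of c] by simp
    have "Im (ip M g (T f)) = - Im (ip M f (T g))"
      using real[OF L2_lin[OF g f, of 1]] real[OF f] real[OF g] unfolding expand by simp
    moreover have "Re (ip M g (T f)) = Re (ip M f (T g))"
      using real[OF L2_lin[OF g f, of \<i>]] real[OF f] real[OF g] unfolding expand by simp
    ultimately show ?thesis by (simp add: complex_eq_iff)
  qed
  show ?thesis
    unfolding hermitian_form_def using L2_lin herm operator_form_lin_right by blast
qed

text \<open>Continuity of the quadratic form u \<mapsto> <u, T u> of a bounded operator in L2:
  <f_n, T f_n> - <f, T f> = <d_n, T f_n> + <f, T d_n> with d_n = f_n - f.\<close>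
lemma operator_form_tendsto:
  assumes fn: "\<And>n. f n \<in> L2 M" and f: "g \<in> L2 M"
    and lim: "(\<lambda>n. nrm2 M (\<lambda>x. f n x - g x)) \<longlonglongrightarrow> 0"
  shows "(\<lambda>n. ip M (f n) (T (f n))) \<longlonglongrightarrow> ip M g (T g)"
proof -
  obtain K where K0: "K \<ge> 0" and K: "\<And>u. u \<in> L2 M \<Longrightarrow> nrm2 M (T u) \<le> K * nrm2 M u"
    using operator_bounded by blast
  define d where "d n = (\<lambda>x. f n x - g x)" for n
  have d: "d n \<in> L2 M" for n unfolding d_def by (rule L2_diff[OF fn f])
  have fd: "f n = (\<lambda>x. d n x + g x)" for n unfolding d_def by simp
  have split: "ip M (f n) (T (f n)) - ip M g (T g) = ip M (d n) (T (f n)) + ip M g (T (d n))" for n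
    using ip_diff_left[OF operator_L2[OF fn] fn f, of n]
      operator_form_lin_right[OF f d f, of 1 n] unfolding fd[of n, symmetric] d_def by simp
  have Tfn: "nrm2 M (T (f n)) \<le> K * (2 * nrm2 M (d n) + 2 * nrm2 M g)" for n
    using K[OF fn] mult_left_mono[OF nrm2_add_le[OF d f] K0] unfolding fd[symmetric]
    by (metis order_trans)
  define b where "b n = sqrt (nrm2 M (d n)) * sqrt (K * (2 * nrm2 M (d n) + 2 * nrm2 M g))
      + sqrt (nrm2 M g) * sqrt (K * nrm2 M (d n))" for n
  have bound: "norm (ip M (f n) (T (f n)) - ip M g (T g)) \<le> b n" for n
  proof -
    have "cmod (ip M (d n) (T (f n))) \<le> sqrt (nrm2 M (d n)) * sqrt (nrm2 M (T (f n)))"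
      by (rule ip_Cauchy_Schwarz[OF d operator_L2[OF fn]])
    also have "\<dots> \<le> sqrt (nrm2 M (d n)) * sqrt (K * (2 * nrm2 M (d n) + 2 * nrm2 M g))"
      using Tfn[of n] by (intro mult_left_mono) (auto simp: nrm2_nonneg)
    finally have 1: "cmod (ip M (d n) (T (f n)))
        \<le> sqrt (nrm2 M (d n)) * sqrt (K * (2 * nrm2 M (d n) + 2 * nrm2 M g))" .
    have "cmod (ip M g (T (d n))) \<le> sqrt (nrm2 M g) * sqrt (nrm2 M (T (d n)))"
      by (rule ip_Cauchy_Schwarz[OF f operator_L2[OF d]])
    also have "\<dots> \<le> sqrt (nrm2 M g) * sqrt (K * nrm2 M (d n))"
      using K[OF d] by (intro mult_left_mono) (auto simp: nrm2_nonneg)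
    finally have 2: "cmod (ip M g (T (d n))) \<le> sqrt (nrm2 M g) * sqrt (K * nrm2 M (d n))" .
    show ?thesis unfolding split b_def using norm_triangle_le[OF add_mono[OF 1 2]] .
  qed
  have "b \<longlonglongrightarrow> sqrt 0 * sqrt (K * (2 * 0 + 2 * nrm2 M g)) + sqrt (nrm2 M g) * sqrt (K * 0)"
    unfolding b_def using lim unfolding d_def by (intro tendsto_intros)
  then have "(\<lambda>n. ip M (f n) (T (f n)) - ip M g (T g)) \<longlonglongrightarrow> 0"
    by (intro Lim_null_comparison[OF always_eventually[OF allI[OF bound]]]) simp
  then have "(\<lambda>n. ip M (f n) (T (f n)) - ip M g (T g) + ip M g (T g)) \<longlonglongrightarrow> 0 + ip M g (T g)"
    by (intro tendsto_add tendsto_const)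
  then show ?thesis by simp
qed

end

context
  fixes M :: "'a measure" and \<rho> :: "('a \<Rightarrow> complex) \<Rightarrow> ('a \<Rightarrow> complex)"
  assumes prob: "prob_space M" and dens: "density_operator M \<rho>"
begin

lemma density_is_operator: "is_operator M \<rho>"
  using dens unfolding density_operator_def by blast

lemma density_form: "hermitian_form (L2 M) (\<lambda>f g. ip M f (\<rho> g))"
  using dens unfolding density_operator_def by (blast intro: positive_operator_form)

lemma density_positive: "f \<in> L2 M \<Longrightarrow> ip M f (\<rho> f) \<in> \<real> \<and> 0 \<le> Re (ip M f (\<rho> f))"
  using dens unfolding density_operator_def positive_op_def by blast

text \<open>The quadratic form of a density operator is dominated by the squared norm
  (the operator norm of \<rho> is at most its trace 1): with a = <f, \<rho> f>, Parseval and the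
  Cauchy-Schwarz inequality for \<rho> give |\<rho> f|^2 \<le> a * (\<Sum>e. <e, \<rho> e>) = a, and then
  a \<le> |f| |\<rho> f| \<le> |f| sqrt a.\<close>
lemma density_form_le_nrm2:
  assumes f: "f \<in> L2 M"
  shows "Re (ip M f (\<rho> f)) \<le> nrm2 M f"
proof -
  obtain B where B: "onb M B" and tr: "((\<lambda>e. ip M e (\<rho> e)) has_sum 1) B"
    using dens unfolding density_operator_def by (auto simp: has_sum_iff)
  define a where "a = Re (ip M f (\<rho> f))"
  have a0: "0 \<le> a" unfolding a_def using density_positive[OF f] by blast
  have \<rho>f: "\<rho> f \<in> L2 M" by (rule operator_L2[OF density_is_operator f])
  have "((\<lambda>e. Re (ip M e (\<rho> e))) has_sum 1) B" using has_sum_Re[OF tr] by simp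
  then have "nrm2 M (\<rho> f) \<le> a * 1"
  proof (rule has_sum_mono[OF parseval[OF prob B \<rho>f] has_sum_cmult_right])
    fix e assume "e \<in> B"
    then have e: "e \<in> L2 M" using onbD(1)[OF B] by auto
    show "(cmod (ip M e (\<rho> f)))\<^sup>2 \<le> a * Re (ip M e (\<rho> e))"
      using hermitian_form_Cauchy_Schwarz[OF density_form _ e f] density_positive
      unfolding a_def by (simp add: mult.commute)
  qed
  then have "sqrt (nrm2 M (\<rho> f)) \<le> sqrt a" by simp
  have "a \<le> cmod (ip M f (\<rho> f))" unfolding a_def by (rule complex_Re_le_cmod)
  also have "\<dots> \<le> sqrt (nrm2 M f) * sqrt (nrm2 M (\<rho> f))" by (rule ip_Cauchy_Schwarz[OF f \<rho>f])
  also have "\<dots> \<le> sqrt (nrm2 M f) * sqrt a"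
    using \<open>sqrt (nrm2 M (\<rho> f)) \<le> sqrt a\<close> by (intro mult_left_mono) (auto simp: nrm2_nonneg)
  finally have "sqrt a * sqrt a \<le> sqrt (nrm2 M f) * sqrt a"
    using a0 by (simp only: real_sqrt_mult_self)
  show ?thesis
  proof (cases "a = 0")
    case False
    then have "sqrt a \<le> sqrt (nrm2 M f)"
      using mult_right_le_imp_le[OF \<open>sqrt a * sqrt a \<le> _\<close>] a0 by simp
    then show ?thesis unfolding a_def[symmetric] by simp
  qed (simp add: a_def nrm2_nonneg)
qed

text \<open>The q-measure is the quadratic form of \<rho> at the characteristic function:
  tr[\<rho> |\<chi>_A><\<chi>_A|] = <\<chi>_A, \<rho> \<chi>_A>, by the polarized Parseval identity in the basis
  used to define the trace.\<close>
lemma mu_q_eq_form: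
  assumes A: "A \<in> sets M"
  shows "mu_q M \<rho> A = ip M (indicator A) (\<rho> (indicator A))"
proof -
  let ?B = "SOME B. onb M B" and ?\<chi> = "indicator A :: 'a \<Rightarrow> complex"
  have "\<exists>B. onb M B" using dens unfolding density_operator_def by blast
  then have B: "onb M ?B" by (rule someI_ex)
  have \<chi>: "?\<chi> \<in> L2 M" using prob A by (intro L2_indicator) (simp add: prob_space.finite_measure)
  have coeff: "ip M e ((\<rho> \<circ> qmu M A) e) = cnj (ip M e ?\<chi>) * ip M e (\<rho> ?\<chi>)"
    if e: "e \<in> ?B" for e
  proof -
    have eL: "e \<in> L2 M" using e onbD(1)[OF B] by auto
    have "(LINT y:A|M. e y) = ip M ?\<chi> e"
      unfolding set_lebesgue_integral_def ip_def
      by (intro Bochner_Integration.integral_cong) (auto simp: indicator_def)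
    then have "qmu M A e = (\<lambda>x. ip M ?\<chi> e * ?\<chi> x + 0)"
      unfolding qmu_def by simp
    then have "ip M e (\<rho> (qmu M A e)) = ip M ?\<chi> e * ip M e (\<rho> ?\<chi>) + ip M e (\<rho> (\<lambda>x. 0))"
      using operator_form_lin_right[OF density_is_operator eL \<chi> L2_zero] by simp
    also have "ip M e (\<rho> (\<lambda>x. 0)) = 0"
      using operator_form_lin_right[OF density_is_operator eL L2_zero L2_zero, of 1] by simp
    finally show ?thesis unfolding ip_cnj[of M ?\<chi> e] by simp
  qed
  from parseval_polar[OF prob B \<chi> operator_L2[OF density_is_operator \<chi>]]
  have "((\<lambda>e. ip M e ((\<rho> \<circ> qmu M A) e)) has_sum ip M ?\<chi> (\<rho> ?\<chi>)) ?B"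
    by (rule has_sum_cong[THEN iffD2, rotated]) (rule coeff)
  then show ?thesis unfolding mu_q_def trace_def by (simp add: has_sum_iff)
qed

end


lemma nrm2_indicator_diff:
  assumes fm: "finite_measure M" and S: "S \<in> sets M" and T: "T \<in> sets M" and TS: "T \<subseteq> S"
  shows "nrm2 M (\<lambda>x. indicator S x - indicator T x) = measure M S - measure M T"
proof -
  have "(\<lambda>x. (cmod (indicator S x - indicator T x :: complex))\<^sup>2) = (\<lambda>x. indicator (S - T) x :: real)"
    using TS by (intro ext) (auto split: split_indicator)
  then have "nrm2 M (\<lambda>x. indicator S x - indicator T x) = measure M ((S - T) \<inter> space M)"
    unfolding nrm2_def by simp
  also have "(S - T) \<inter> space M = S - T" using S sets.sets_into_space by blast
  finally show ?thesis using finite_measure.finite_measure_Diff[OF fm S T TS] by simp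
qed

lemma nrm2_indicator:
  assumes "finite_measure M" "S \<in> sets M"
  shows "nrm2 M (indicator S) = measure M S"
  using nrm2_indicator_diff[OF assms sets.empty_sets] by simp

lemma indicator_disjoint_Un:
  "A \<inter> B = {} \<Longrightarrow> (indicator (A \<union> B) :: 'a \<Rightarrow> complex) = (\<lambda>x. indicator A x + indicator B x)"
  by (intro ext) (auto split: split_indicator)

section \<open>Properties of the q-measure\<close>

context
  fixes M :: "'a measure" and \<rho> :: "('a \<Rightarrow> complex) \<Rightarrow> ('a \<Rightarrow> complex)"
  assumes prob: "prob_space M" and dens: "density_operator M \<rho>"
begin

lemma indicator_L2: "A \<in> sets M \<Longrightarrow> (indicator A :: 'a \<Rightarrow> complex) \<in> L2 M"
  using prob by (intro L2_indicator) (simp add: prob_space.finite_measure)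

lemma mu_q_bounds:
  assumes A: "A \<in> sets M"
  shows "mu_q M \<rho> A \<in> \<real> \<and> 0 \<le> Re (mu_q M \<rho> A) \<and> Re (mu_q M \<rho> A) \<le> measure M A"
  using density_positive[OF prob dens indicator_L2[OF A]]
    density_form_le_nrm2[OF prob dens indicator_L2[OF A]]
    nrm2_indicator[OF prob_space.finite_measure[OF prob] A]
  by (simp add: mu_q_eq_form[OF prob dens A])

text \<open>Grade-2 additivity: on disjoint sets the characteristic function of a union is the
  sum of the characteristic functions, and mu_rho is a quadratic form in it.\<close>
lemma mu_q_grade2:
  assumes A: "A \<in> sets M" and B: "B \<in> sets M" and C: "C \<in> sets M"
    and disj: "A \<inter> B = {}" "A \<inter> C = {}" "B \<inter> C = {}"
  shows "mu_q M \<rho> (A \<union> B \<union> C) = mu_q M \<rho> (A \<union> B) + mu_q M \<rho> (A \<union> C) + mu_q M \<rho> (B \<union> C)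
           - mu_q M \<rho> A - mu_q M \<rho> B - mu_q M \<rho> C"
proof -
  have "(A \<union> B) \<inter> C = {}" using disj by auto
  then show ?thesis
    using hf_quadratic_grade2[OF density_form[OF prob dens]
        indicator_L2[OF A] indicator_L2[OF B] indicator_L2[OF C]] A B C
    by (simp add: mu_q_eq_form[OF prob dens] indicator_disjoint_Un disj)
qed

text \<open>Continuity along any sequence of sets S_n whose characteristic functions converge to
  that of T in L2, i.e. the measure of the symmetric difference of S_n and T tends to 0.\<close>
lemma mu_q_tendsto:
  assumes S: "\<And>n. S n \<in> sets M" and T: "T \<in> sets M"
    and lim: "(\<lambda>n. nrm2 M (\<lambda>x. indicator (S n) x - indicator T x)) \<longlonglongrightarrow> 0"
  shows "(\<lambda>n. mu_q M \<rho> (S n)) \<longlonglongrightarrow> mu_q M \<rho> T"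
  using operator_form_tendsto[OF density_is_operator[OF prob dens] indicator_L2[OF S]
      indicator_L2[OF T] lim]
  by (simp add: mu_q_eq_form[OF prob dens] S T)

lemma mu_q_incseq:
  assumes A: "range A \<subseteq> sets M" "incseq A"
  shows "(\<lambda>i. mu_q M \<rho> (A i)) \<longlonglongrightarrow> mu_q M \<rho> (\<Union>i. A i)"
proof (rule mu_q_tendsto)
  have fm: "finite_measure M" by (rule prob_space.finite_measure[OF prob])
  have "(\<lambda>n. measure M (A n)) \<longlonglongrightarrow> measure M (\<Union>i. A i)"
    using A by (intro Lim_measure_incseq) (auto simp: finite_measure.emeasure_finite[OF fm])
  then have "(\<lambda>n. measure M (\<Union>i. A i) - measure M (A n)) \<longlonglongrightarrow> 0"
    using tendsto_diff[OF tendsto_const[of "measure M (\<Union>i. A i)"]] by fastforce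
  moreover have "nrm2 M (\<lambda>x. indicator (A n) x - indicator (\<Union>i. A i) x)
      = measure M (\<Union>i. A i) - measure M (A n)" for n
    using A nrm2_diff_commute[of M "indicator (A n)"]
      nrm2_indicator_diff[OF fm, of "\<Union>i. A i" "A n"] by auto
  ultimately show "(\<lambda>n. nrm2 M (\<lambda>x. indicator (A n) x - indicator (\<Union>i. A i) x)) \<longlonglongrightarrow> 0"
    by simp
qed (use A in auto)

lemma mu_q_decseq:
  assumes B: "range B \<subseteq> sets M" "decseq B"
  shows "(\<lambda>i. mu_q M \<rho> (B i)) \<longlonglongrightarrow> mu_q M \<rho> (\<Inter>i. B i)"
proof (rule mu_q_tendsto)
  have fm: "finite_measure M" by (rule prob_space.finite_measure[OF prob])
  have "(\<lambda>n. measure M (B n)) \<longlonglongrightarrow> measure M (\<Inter>i. B i)"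
    using B by (intro finite_measure.finite_Lim_measure_decseq[OF fm]) auto
  then have "(\<lambda>n. measure M (B n) - measure M (\<Inter>i. B i)) \<longlonglongrightarrow> 0"
    by (rule LIM_zero)
  moreover have "nrm2 M (\<lambda>x. indicator (B n) x - indicator (\<Inter>i. B i) x)
      = measure M (B n) - measure M (\<Inter>i. B i)" for n
    using B nrm2_indicator_diff[OF fm, of "B n" "\<Inter>i. B i"] by auto
  ultimately show "(\<lambda>n. nrm2 M (\<lambda>x. indicator (B n) x - indicator (\<Inter>i. B i) x)) \<longlonglongrightarrow> 0"
    by simp
qed (use B in auto)

end

theorem mainTheorem6:
  fixes M :: "'a measure" and \<rho> :: "('a \<Rightarrow> complex) \<Rightarrow> ('a \<Rightarrow> complex)"
  assumes "prob_space M" and "density_operator M \<rho>"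
  shows "(\<forall>A\<in>sets M. mu_q M \<rho> A \<in> \<real> \<and> 0 \<le> Re (mu_q M \<rho> A) \<and> Re (mu_q M \<rho> A) \<le> measure M A)
    \<and> (\<forall>A\<in>sets M. \<forall>B\<in>sets M. \<forall>C\<in>sets M.
          A \<inter> B = {} \<and> A \<inter> C = {} \<and> B \<inter> C = {} \<longrightarrow>
          mu_q M \<rho> (A \<union> B \<union> C) = mu_q M \<rho> (A \<union> B) + mu_q M \<rho> (A \<union> C) + mu_q M \<rho> (B \<union> C)
             - mu_q M \<rho> A - mu_q M \<rho> B - mu_q M \<rho> C)
    \<and> (\<forall>A :: nat \<Rightarrow> 'a set. range A \<subseteq> sets M \<and> incseq A \<longrightarrow>
          (\<lambda>i. mu_q M \<rho> (A i)) \<longlonglongrightarrow> mu_q M \<rho> (\<Union>i. A i))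
    \<and> (\<forall>B :: nat \<Rightarrow> 'a set. range B \<subseteq> sets M \<and> decseq B \<longrightarrow>
          (\<lambda>i. mu_q M \<rho> (B i)) \<longlonglongrightarrow> mu_q M \<rho> (\<Inter>i. B i))"
  using mu_q_bounds[OF assms] mu_q_grade2[OF assms] mu_q_incseq[OF assms] mu_q_decseq[OF assms]
  by blast

end
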